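(* Let $B$ be a unital commutative semi-simple Banach algebra with connected maximal ideal space $X$, and let $T$ be a unital endomorphism of $B$ which is a Riesz operator. Then $\{f\in B: Tf=f\}$ is one dimensional; that is, the eigenvalue $1$ of $T$ has multiplicity $1$, and $Tf=f$ implies that $f$ is a constant multiple of $1$.
   Context: A unital endomorphism of $B$ is a linear multiplicative map $T:B\to B$ with $T1=1$. A bounded operator $T$ is a Riesz operator if $\lim_{n}\left[\inf\{\|T^n-K\|:K \text{ compact}\}\right]^{1/n}=0$. The maximal ideal space carries the Gelfand topology. *)

theory Defs
  imports "HOL-Analysis.Analysis"
begin

text \<open>A complex Banach algebra structure on a real Banach algebra: an explicit complex
  scalar multiplication sc extending the real one, with the complex normed-space
  and algebra axioms.\<close>
definition complex_scaling :: "(complex \<Rightarrow> 'a::{real_normed_algebra,comm_ring_1} \<Rightarrow> 'a) \<Rightarrow> bool" where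
  "complex_scaling sc \<longleftrightarrow>
     (\<forall>r x. sc (complex_of_real r) x = scaleR r x) \<and>
     (\<forall>a b x. sc (a + b) x = sc a x + sc b x) \<and>
     (\<forall>a x y. sc a (x + y) = sc a x + sc a y) \<and>
     (\<forall>a b x. sc (a * b) x = sc a (sc b x)) \<and>
     (\<forall>a x. norm (sc a x) = cmod a * norm x) \<and>
     (\<forall>a x y. sc a (x * y) = sc a x * y)"

definition clinear_map :: "(complex \<Rightarrow> 'a \<Rightarrow> 'a) \<Rightarrow> ('a::real_normed_vector \<Rightarrow> 'a) \<Rightarrow> bool" where
  "clinear_map sc T \<longleftrightarrow> (\<forall>x y. T (x + y) = T x + T y) \<and> (\<forall>c x. T (sc c x) = sc c (T x))"

definition bounded_op :: "(complex \<Rightarrow> 'a \<Rightarrow> 'a) \<Rightarrow> ('a::real_normed_vector \<Rightarrow> 'a) \<Rightarrow> bool" where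
  "bounded_op sc T \<longleftrightarrow> clinear_map sc T \<and> (\<exists>M. \<forall>x. norm (T x) \<le> norm x * M)"

definition compact_op :: "(complex \<Rightarrow> 'a \<Rightarrow> 'a) \<Rightarrow> ('a::real_normed_vector \<Rightarrow> 'a) \<Rightarrow> bool" where
  "compact_op sc K \<longleftrightarrow> bounded_op sc K \<and> compact (closure (K ` ball 0 1))"

definition riesz_op :: "(complex \<Rightarrow> 'a \<Rightarrow> 'a) \<Rightarrow> ('a::real_normed_vector \<Rightarrow> 'a) \<Rightarrow> bool" where
  "riesz_op sc T \<longleftrightarrow> bounded_op sc T \<and>
     (\<lambda>n. (Inf {onorm (\<lambda>x. (T ^^ n) x - K x) | K. compact_op sc K}) powr (1 / real n))
       \<longlonglongrightarrow> 0"

definition unital_endomorphism :: "(complex \<Rightarrow> 'a \<Rightarrow> 'a) \<Rightarrow> ('a::{real_normed_algebra,comm_ring_1} \<Rightarrow> 'a) \<Rightarrow> bool" where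
  "unital_endomorphism sc T \<longleftrightarrow> clinear_map sc T \<and> (\<forall>x y. T (x * y) = T x * T y) \<and> T 1 = 1"

definition ring_ideal :: "'a::comm_ring_1 set \<Rightarrow> bool" where
  "ring_ideal I \<longleftrightarrow> 0 \<in> I \<and> (\<forall>x\<in>I. \<forall>y\<in>I. x + y \<in> I) \<and> (\<forall>x\<in>I. - x \<in> I) \<and>
     (\<forall>x\<in>I. \<forall>y. y * x \<in> I)"

definition maximal_ideal :: "'a::comm_ring_1 set \<Rightarrow> bool" where
  "maximal_ideal I \<longleftrightarrow> ring_ideal I \<and> I \<noteq> UNIV \<and>
     (\<forall>J. ring_ideal J \<and> I \<subseteq> J \<longrightarrow> J = I \<or> J = UNIV)"

definition semisimple :: "'a::comm_ring_1 itself \<Rightarrow> bool" where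
  "semisimple _ \<longleftrightarrow> \<Inter> {I :: 'a set. maximal_ideal I} = {0}"

text \<open>Maximal ideal space: nonzero multiplicative complex-linear functionals (characters);
  its Gelfand topology is the topology of pointwise convergence, i.e. the subspace
  topology of the product topology on 'a => complex.\<close>
definition characters :: "(complex \<Rightarrow> 'a \<Rightarrow> 'a) \<Rightarrow> ('a::{real_normed_algebra,comm_ring_1} \<Rightarrow> complex) set" where
  "characters sc = {\<phi>. (\<forall>x y. \<phi> (x + y) = \<phi> x + \<phi> y) \<and> (\<forall>c x. \<phi> (sc c x) = c * \<phi> x) \<and>
       (\<forall>x y. \<phi> (x * y) = \<phi> x * \<phi> y) \<and> \<phi> \<noteq> (\<lambda>_. 0)}"

end

(* As T is a Riesz operator, some power T^n lies within 1/16 of a compact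
   operator K.  On the fixed space E = {f. T f = f} the operator T^n is the identity, so the unit
   ball of E lies within 1/16 of a compact set; by Riesz's lemma E then contains no infinite
   linearly independent sequence.  Since T is an algebra homomorphism, E is a subalgebra, so the
   powers of a fixed point f are linearly dependent: f is a root of a nonzero polynomial p.
   Every character phi is multiplicative, hence phi f is a root of p as well.  The continuous map
   phi |-> phi f on the connected space of characters therefore has finite range and is constant,
   say equal to c.  By Gelfand--Mazur every maximal ideal is the kernel of a character, so
   f - c 1 lies in every maximal ideal and vanishes by semi-simplicity.

   Gelfand--Mazur is proved in the elementary way of Kametani and Rickart: if x - c 1 is
   outside a maximal ideal M for every scalar c, the norm of the inverse of x - c 1 in B/M is a
   positive continuous function of c vanishing at infinity.  Averaging the resolvent over the
   n-th roots of unity shows that the set where this function attains its maximum is open, which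
   contradicts the connectedness of the complex plane. *)

theory Submission
  imports Defs
begin

section \<open>Ideals of commutative rings\<close>

lemma
  fixes I :: "'a::comm_ring_1 set"
  assumes "ring_ideal I"
  shows ring_ideal_zero: "0 \<in> I"
    and ring_ideal_add: "x \<in> I \<Longrightarrow> y \<in> I \<Longrightarrow> x + y \<in> I"
    and ring_ideal_minus: "x \<in> I \<Longrightarrow> - x \<in> I"
    and ring_ideal_mult_left: "x \<in> I \<Longrightarrow> y * x \<in> I"
    and ring_ideal_mult_right: "x \<in> I \<Longrightarrow> x * y \<in> I"
  using assms unfolding ring_ideal_def by (auto simp: mult.commute)

lemma ring_ideal_diff:
  "ring_ideal I \<Longrightarrow> x \<in> I \<Longrightarrow> y \<in> I \<Longrightarrow> x - y \<in> I"
  by (metis diff_conv_add_uminus ring_ideal_add ring_ideal_minus)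

lemma ring_ideal_sum:
  "ring_ideal I \<Longrightarrow> (\<And>i. i \<in> A \<Longrightarrow> f i \<in> I) \<Longrightarrow> (\<Sum>i\<in>A. f i) \<in> I"
  by (induction A rule: infinite_finite_induct) (auto intro: ring_ideal_zero ring_ideal_add)

lemma ring_ideal_one_imp_UNIV:
  "ring_ideal I \<Longrightarrow> 1 \<in> I \<Longrightarrow> I = UNIV"
  using ring_ideal_mult_right[of I 1] by auto

lemma ring_ideal_extend:
  fixes I :: "'a::comm_ring_1 set"
  assumes I: "ring_ideal I"
  shows "ring_ideal {m + u * b | m b. m \<in> I}"
  unfolding ring_ideal_def
proof (intro conjI ballI allI)
  show "0 \<in> {m + u * b | m b. m \<in> I}"
    by (metis (mono_tags, lifting) I add.right_neutral mem_Collect_eq mult_zero_right ring_ideal_zero)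
next
  fix x y assume "x \<in> {m + u * b | m b. m \<in> I}" "y \<in> {m + u * b | m b. m \<in> I}"
  then obtain m1 b1 m2 b2 where "x = m1 + u * b1" "y = m2 + u * b2" "m1 \<in> I" "m2 \<in> I" by blast
  then have "x + y = (m1 + m2) + u * (b1 + b2)" "m1 + m2 \<in> I"
    by (simp_all add: algebra_simps ring_ideal_add[OF I])
  then show "x + y \<in> {m + u * b | m b. m \<in> I}" by blast
next
  fix x y assume "x \<in> {m + u * b | m b. m \<in> I}"
  then obtain m1 b1 where x: "x = m1 + u * b1" "m1 \<in> I" by blast
  have "- x = (- m1) + u * (- b1)" "- m1 \<in> I"
    by (simp_all add: x algebra_simps ring_ideal_minus[OF I])
  then show "- x \<in> {m + u * b | m b. m \<in> I}" by blast
  have "y * x = y * m1 + u * (y * b1)" "y * m1 \<in> I"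
    by (simp_all add: x algebra_simps ring_ideal_mult_right[OF I])
  then show "y * x \<in> {m + u * b | m b. m \<in> I}" by blast
qed

lemma maximal_ideal_inverse_mod:
  fixes M :: "'a::comm_ring_1 set"
  assumes M: "maximal_ideal M" and a: "a \<notin> M"
  shows "\<exists>r. a * r - 1 \<in> M"
proof -
  have ideal: "ring_ideal M" using M unfolding maximal_ideal_def by blast
  define J where "J = {m + a * b | m b. m \<in> M}"
  have "ring_ideal J" unfolding J_def by (rule ring_ideal_extend[OF ideal])
  moreover have "M \<subseteq> J"
  proof
    fix m assume "m \<in> M"
    moreover have "m = m + a * 0" by simp
    ultimately show "m \<in> J" unfolding J_def by blast
  qed
  moreover have "a \<in> J - M"
  proof -
    have "a = 0 + a * 1" by simp
    then show ?thesis unfolding J_def using a ring_ideal_zero[OF ideal] by blast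
  qed
  ultimately have "1 \<in> J" using M unfolding maximal_ideal_def by blast
  then obtain m b where "1 = m + a * b" "m \<in> M" unfolding J_def by blast
  then have "a * b - 1 = - m" "- m \<in> M" by (simp_all add: algebra_simps ring_ideal_minus[OF ideal])
  then show ?thesis by metis
qed

section \<open>Neumann series\<close>

lemma norm_power_Suc_le:
  fixes y :: "'a::{real_normed_algebra,ring_1}"
  shows "norm (y ^ Suc n) \<le> norm y ^ Suc n"
proof (induction n)
  case (Suc n)
  have "norm (y ^ Suc (Suc n)) \<le> norm y * norm (y ^ Suc n)"
    by (metis norm_mult_ineq power_Suc)
  also have "\<dots> \<le> norm y * norm y ^ Suc n"
    by (rule mult_left_mono[OF Suc]) simp
  finally show ?case by simp
qed simp

lemma neumann_series_inverse:
  fixes y :: "'a::{real_normed_algebra,ring_1,banach}"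
  assumes "norm y \<le> 1/2"
  shows "\<exists>w. (1 - y) * w = 1 \<and> norm w \<le> 2 * (norm (1::'a) + 1)"
proof -
  define g where "g n = (norm (1::'a) + 1) * (1/2::real) ^ n" for n
  have norm_power_le_g: "norm (y ^ n) \<le> g n" for n
  proof (cases n)
    case (Suc m)
    have "norm (y ^ n) \<le> norm y ^ n" using norm_power_Suc_le[of y m] Suc by simp
    also have "\<dots> \<le> (1/2) ^ n" by (rule power_mono) (use assms in auto)
    also have "\<dots> \<le> g n" unfolding g_def by (simp add: mult_le_cancel_right1)
    finally show ?thesis .
  qed (simp add: g_def)
  have "summable g" unfolding g_def by (intro summable_mult summable_geometric) simp
  then have sn: "summable (\<lambda>n. norm (y ^ n))"
    by (rule summable_comparison_test[rotated]) (use norm_power_le_g in auto)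
  then have s: "summable (\<lambda>n. y ^ n)" by (rule summable_norm_cancel)
  define w where "w = (\<Sum>n. y ^ n)"
  have "norm w \<le> (\<Sum>n. norm (y ^ n))" using summable_norm[OF sn] by (simp add: w_def)
  also have "\<dots> \<le> (\<Sum>n. g n)" by (rule suminf_le[OF norm_power_le_g sn \<open>summable g\<close>])
  also have "(\<Sum>n. g n) = 2 * (norm (1::'a) + 1)"
    unfolding g_def by (simp add: suminf_mult[OF summable_geometric] suminf_geometric)
  finally have "norm w \<le> 2 * (norm (1::'a) + 1)" .
  moreover have "(1 - y) * w = 1"
  proof -
    have "(\<lambda>n. y ^ n - y ^ Suc n) sums (y ^ 0 - 0)"
      by (rule telescope_sums'[OF summable_LIMSEQ_zero[OF s]])
    moreover have "(\<lambda>n. y ^ n - y ^ Suc n) sums ((1 - y) * w)"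
      using sums_mult[OF summable_sums[OF s], of "1 - y"] by (simp add: w_def algebra_simps)
    ultimately show ?thesis using sums_unique2 by fastforce
  qed
  ultimately show ?thesis by blast
qed

section \<open>Complex Banach algebras and the quotient norm\<close>

locale complex_banach_algebra =
  fixes sc :: "complex \<Rightarrow> 'a::{real_normed_algebra,comm_ring_1,banach} \<Rightarrow> 'a"
  assumes complex_scaling: "complex_scaling sc"
begin

definition cscalar :: "complex \<Rightarrow> 'a" where "cscalar c = sc c 1"

lemma sc_of_real: "sc (complex_of_real r) x = r *\<^sub>R x"
  and sc_add_left: "sc (a + b) x = sc a x + sc b x"
  and sc_assoc: "sc (a * b) x = sc a (sc b x)"
  and norm_sc: "norm (sc a x) = cmod a * norm x"
  and sc_mult_left: "sc a (x * y) = sc a x * y"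
  using complex_scaling unfolding complex_scaling_def by blast+

lemma sc_eq_cscalar_mult: "sc a x = cscalar a * x"
  using sc_mult_left[of a 1 x] by (simp add: cscalar_def)

lemma cscalar_add: "cscalar (a + b) = cscalar a + cscalar b"
  by (simp add: cscalar_def sc_add_left)

lemma cscalar_mult: "cscalar (a * b) = cscalar a * cscalar b"
  unfolding cscalar_def sc_assoc by (subst sc_eq_cscalar_mult) (simp add: cscalar_def)

lemma cscalar_one [simp]: "cscalar 1 = 1"
  using sc_of_real[of 1 1] by (simp add: cscalar_def)

lemma cscalar_zero [simp]: "cscalar 0 = 0"
  using sc_of_real[of 0 1] by (simp add: cscalar_def)

lemma cscalar_diff: "cscalar (a - b) = cscalar a - cscalar b"
  by (metis cscalar_add eq_diff_eq)

lemma cscalar_power: "cscalar (a ^ n) = cscalar a ^ n"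
  by (induction n) (simp_all add: cscalar_mult)

lemma cscalar_sum: "cscalar (sum f A) = (\<Sum>i\<in>A. cscalar (f i))"
  by (induction A rule: infinite_finite_induct) (simp_all add: cscalar_add)

lemma norm_cscalar_mult: "norm (cscalar c * x) = cmod c * norm x"
  using norm_sc[of c x] by (simp add: sc_eq_cscalar_mult)

lemma characterD:
  assumes "\<phi> \<in> characters sc"
  shows "\<phi> (x + y) = \<phi> x + \<phi> y" "\<phi> (x * y) = \<phi> x * \<phi> y" "\<phi> (sc c x) = c * \<phi> x"
    and "\<phi> 1 = 1" "\<phi> (x - y) = \<phi> x - \<phi> y" "\<phi> (r *\<^sub>R x) = complex_of_real r * \<phi> x"
    and "\<phi> (x ^ n) = \<phi> x ^ n" "\<phi> (sum f A) = (\<Sum>i\<in>A. \<phi> (f i))"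
proof -
  have add: "\<And>x y. \<phi> (x + y) = \<phi> x + \<phi> y" and scale: "\<And>c x. \<phi> (sc c x) = c * \<phi> x"
    and mult: "\<And>x y. \<phi> (x * y) = \<phi> x * \<phi> y" and nonzero: "\<phi> \<noteq> (\<lambda>_. 0)"
    using assms unfolding characters_def by blast+
  show "\<phi> (x + y) = \<phi> x + \<phi> y" "\<phi> (x * y) = \<phi> x * \<phi> y" "\<phi> (sc c x) = c * \<phi> x"
    by (rule add mult scale)+
  obtain z where "\<phi> z \<noteq> 0" using nonzero by auto
  moreover have "\<phi> z * \<phi> 1 = \<phi> z * 1" using mult[of z 1] by simp
  ultimately show one: "\<phi> 1 = 1" by simp
  show "\<phi> (x - y) = \<phi> x - \<phi> y" using add[of "x - y" y] by (simp add: algebra_simps)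
  show "\<phi> (r *\<^sub>R x) = complex_of_real r * \<phi> x" using scale[of "complex_of_real r" x] by (simp add: sc_of_real)
  show "\<phi> (x ^ n) = \<phi> x ^ n" by (induction n) (simp_all add: one mult)
  have "\<phi> 0 = 0" using add[of 0 0] by simp
  then show "\<phi> (sum f A) = (\<Sum>i\<in>A. \<phi> (f i))"
    by (induction A rule: infinite_finite_induct) (simp_all add: add)
qed

end

lemma infdist_lessD:
  assumes "A \<noteq> {}" "infdist x A < e"
  shows "\<exists>a\<in>A. dist x a < e"
  using cInf_lessD[of "(\<lambda>a. dist x a) ` A" e] assms by (auto simp: infdist_def)

locale banach_ideal = complex_banach_algebra sc
  for sc :: "complex \<Rightarrow> 'a::{real_normed_algebra,comm_ring_1,banach} \<Rightarrow> 'a" +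
  fixes M :: "'a set"
  assumes ideal: "ring_ideal M"
begin

lemmas ideal_zero [simp] = ring_ideal_zero[OF ideal]
  and ideal_add = ring_ideal_add[OF ideal]
  and ideal_minus = ring_ideal_minus[OF ideal]
  and ideal_diff = ring_ideal_diff[OF ideal]
  and ideal_mult_left = ring_ideal_mult_left[OF ideal]
  and ideal_mult_right = ring_ideal_mult_right[OF ideal]
  and ideal_sum = ring_ideal_sum[OF ideal]

lemma ideal_nonempty: "M \<noteq> {}"
  using ideal_zero by blast

text \<open>The norm of y + M in B/M; since M need not be closed, this is only a seminorm.\<close>
definition qnorm :: "'a \<Rightarrow> real" where "qnorm y = infdist y M"

lemma qnorm_le: "m \<in> M \<Longrightarrow> qnorm y \<le> norm (y - m)"
  unfolding qnorm_def by (metis dist_norm infdist_le)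

lemma qnorm_nonneg: "0 \<le> qnorm y"
  unfolding qnorm_def by (rule infdist_nonneg)

lemma qnorm_approx: "0 < e \<Longrightarrow> \<exists>m\<in>M. norm (y - m) < qnorm y + e"
  using infdist_lessD[OF ideal_nonempty, of y "qnorm y + e"] by (auto simp: qnorm_def dist_norm)

lemma qnorm_greatest: "(\<And>m. m \<in> M \<Longrightarrow> c \<le> norm (y - m)) \<Longrightarrow> c \<le> qnorm y"
  using ideal_nonempty unfolding qnorm_def infdist_def by (auto simp: dist_norm intro!: cINF_greatest)

lemma qnorm_le_norm: "qnorm y \<le> norm y"
  using qnorm_le[OF ideal_zero, of y] by simp

lemma qnorm_zero [simp]: "qnorm 0 = 0"
  using qnorm_le_norm[of 0] qnorm_nonneg[of 0] by simp

lemma qnorm_cong: "y - z \<in> M \<Longrightarrow> qnorm y = qnorm z"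
proof -
  have le: "qnorm y \<le> qnorm z" if "y - z \<in> M" for y z
  proof (rule qnorm_greatest)
    fix m assume "m \<in> M"
    then have "m + (y - z) \<in> M" using that by (rule ideal_add)
    then show "qnorm y \<le> norm (z - m)" using qnorm_le[of "m + (y - z)" y] by (simp add: algebra_simps)
  qed
  assume "y - z \<in> M"
  moreover from this have "z - y \<in> M" using ideal_minus by fastforce
  ultimately show ?thesis using le[of y z] le[of z y] by simp
qed

lemma qnorm_minus: "qnorm (- y) = qnorm y"
proof -
  have "qnorm (- y) \<le> qnorm y" for y
  proof (rule qnorm_greatest)
    fix m assume "m \<in> M"
    then show "qnorm (- y) \<le> norm (y - m)"
      using qnorm_le[OF ideal_minus, of m "- y"] by (simp add: norm_minus_commute)
  qed
  from this[of y] this[of "- y"] show ?thesis by simp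
qed

lemma qnorm_add: "qnorm (a + b) \<le> qnorm a + qnorm b"
proof (rule field_le_epsilon)
  fix e :: real assume "0 < e"
  then obtain m1 m2 where m: "m1 \<in> M" "norm (a - m1) < qnorm a + e/2"
    "m2 \<in> M" "norm (b - m2) < qnorm b + e/2"
    using qnorm_approx[of "e/2"] by (meson half_gt_zero)
  then have "qnorm (a + b) \<le> norm ((a - m1) + (b - m2))"
    using qnorm_le[OF ideal_add[of m1 m2], of "a + b"] by (simp add: algebra_simps)
  also have "\<dots> \<le> norm (a - m1) + norm (b - m2)" by (rule norm_triangle_ineq)
  finally show "qnorm (a + b) \<le> qnorm a + qnorm b + e" using m by simp
qed

lemma qnorm_diff: "qnorm (a - b) \<le> qnorm a + qnorm b"
  using qnorm_add[of a "- b"] qnorm_minus[of b] by simp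

lemma qnorm_abs_diff: "\<bar>qnorm a - qnorm b\<bar> \<le> qnorm (a - b)"
  using qnorm_add[of "a - b" b] qnorm_add[of "b - a" a] qnorm_minus[of "a - b"]
  by (simp add: abs_le_iff algebra_simps)

lemma qnorm_mult: "qnorm (a * b) \<le> qnorm a * qnorm b"
proof (rule field_le_epsilon)
  fix e :: real assume e: "0 < e"
  define d where "d = min 1 (e / (qnorm a + qnorm b + 1))"
  have qa: "0 \<le> qnorm a" and qb: "0 \<le> qnorm b" by (rule qnorm_nonneg)+
  have d: "0 < d" "d \<le> 1" "d * (qnorm a + qnorm b + 1) \<le> e"
    using e qa qb by (auto simp: d_def min_def le_divide_eq)
  obtain m1 m2 where m: "m1 \<in> M" "norm (a - m1) < qnorm a + d"
    "m2 \<in> M" "norm (b - m2) < qnorm b + d"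
    using qnorm_approx[OF d(1)] by blast
  have "m1 * b + a * m2 - m1 * m2 \<in> M"
    using m by (intro ideal_diff ideal_add ideal_mult_left ideal_mult_right)
  then have "qnorm (a * b) \<le> norm ((a - m1) * (b - m2))"
    using qnorm_le by (fastforce simp: algebra_simps)
  also have "\<dots> \<le> norm (a - m1) * norm (b - m2)" by (rule norm_mult_ineq)
  also have "\<dots> \<le> (qnorm a + d) * (qnorm b + d)"
    using m qa d by (intro mult_mono) auto
  also have "\<dots> \<le> qnorm a * qnorm b + d * (qnorm a + qnorm b + 1)"
    using d qa qb by (simp add: algebra_simps)
  finally show "qnorm (a * b) \<le> qnorm a * qnorm b + e" using d by linarith
qed

lemma qnorm_mult_norm: "qnorm (a * b) \<le> norm a * qnorm b"
  using qnorm_mult[of a b] qnorm_le_norm[of a] qnorm_nonneg[of b]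
  by (meson mult_right_mono order_trans)

lemma qnorm_cscalar_mult: "qnorm (cscalar c * a) = cmod c * qnorm a"
proof -
  have le: "qnorm (cscalar c * a) \<le> cmod c * qnorm a" for c a
  proof (cases "c = 0")
    case False
    have "qnorm (cscalar c * a) / cmod c \<le> qnorm a"
    proof (rule qnorm_greatest)
      fix m assume "m \<in> M"
      then have "qnorm (cscalar c * a) \<le> norm (cscalar c * a - cscalar c * m)"
        by (intro qnorm_le ideal_mult_left)
      also have "\<dots> = cmod c * norm (a - m)"
        by (simp add: right_diff_distrib[symmetric] norm_cscalar_mult)
      finally show "qnorm (cscalar c * a) / cmod c \<le> norm (a - m)"
        using False by (simp add: divide_le_eq mult.commute)
    qed
    then show ?thesis using False by (simp add: divide_le_eq mult.commute)
  qed simp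
  show ?thesis
  proof (cases "c = 0")
    case False
    then have "qnorm a = qnorm (cscalar (1 / c) * (cscalar c * a))"
      by (simp add: mult.assoc[symmetric] cscalar_mult[symmetric])
    also have "\<dots> \<le> qnorm (cscalar c * a) / cmod c"
      using le[of "1 / c" "cscalar c * a"] by (simp add: norm_divide)
    finally show ?thesis
      using le[of c a] False by (simp add: le_divide_eq mult.commute antisym)
  qed simp
qed

lemma qnorm_sum: "qnorm (\<Sum>i\<in>A. f i) \<le> (\<Sum>i\<in>A. qnorm (f i))"
proof (induction A rule: infinite_finite_induct)
  case (insert x F)
  then show ?case using qnorm_add[of "f x" "sum f F"] by simp
qed simp_all

lemma qnorm_power: "qnorm (a ^ Suc n) \<le> qnorm a ^ Suc n"
proof (induction n)
  case (Suc n)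
  have "qnorm (a ^ Suc (Suc n)) \<le> qnorm a * qnorm (a ^ Suc n)"
    using qnorm_mult[of a "a ^ Suc n"] by simp
  also have "\<dots> \<le> qnorm a * qnorm a ^ Suc n" by (rule mult_left_mono[OF Suc qnorm_nonneg])
  finally show ?case by simp
qed simp

lemma qnorm_one_ge:
  assumes "1 \<notin> M"
  shows "1/2 \<le> qnorm 1"
proof (rule ccontr)
  assume "\<not> 1/2 \<le> qnorm 1"
  then obtain m where m: "m \<in> M" "norm (1 - m) < 1/2" using qnorm_approx[of "1/2 - qnorm 1" 1] by auto
  then obtain w where "(1 - (1 - m)) * w = 1" using neumann_series_inverse[of "1 - m"] by auto
  then have "1 \<in> M" using ideal_mult_right[OF m(1), of w] by simp
  with assms show False by contradiction
qed

end

section \<open>The Gelfand--Mazur theorem\<close>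

definition unit_root :: "nat \<Rightarrow> complex" where
  "unit_root n = exp (2 * complex_of_real pi * \<i> / of_nat n)"

lemma unit_root_power: "unit_root n ^ j = exp (2 * complex_of_real pi * \<i> * of_nat j / of_nat n)"
  unfolding unit_root_def exp_of_nat_mult[symmetric] by (simp add: mult.commute)

lemma unit_root_power_mult_power:
  assumes "n \<ge> 1"
  shows "(unit_root n ^ k * r) ^ n = r ^ n"
proof -
  have "(unit_root n ^ k) ^ n = 1"
    using complex_root_unity[of n k] assms by (simp add: unit_root_power)
  then show ?thesis by (simp add: power_mult_distrib)
qed

lemma sum_unit_root_power_mult_power:
  assumes n: "n \<ge> 1" and j: "j < n"
  shows "(\<Sum>k<n. (unit_root n ^ k * r) ^ j) = (if j = 0 then of_nat n else 0)"
proof (cases "j = 0")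
  case False
  have "unit_root n ^ j \<noteq> 1"
    using complex_root_unity_eq_1[of n j] n j False by (simp add: unit_root_power nat_dvd_not_less)
  moreover have "(unit_root n ^ j) ^ n = 1"
    using complex_root_unity[of n j] n by (simp add: unit_root_power)
  ultimately have "(\<Sum>k<n. (unit_root n ^ j) ^ k) = 0" by (simp add: sum_gp_strict)
  moreover have "(\<Sum>k<n. (unit_root n ^ k * r) ^ j) = r ^ j * (\<Sum>k<n. (unit_root n ^ j) ^ k)"
    by (simp add: sum_distrib_left power_mult_distrib power_mult[symmetric] mult.commute)
  ultimately show ?thesis using False by simp
qed simp

locale banach_maximal_ideal = banach_ideal +
  assumes maximal: "maximal_ideal M"
begin

lemma one_not_in_ideal: "1 \<notin> M"
  using maximal ring_ideal_one_imp_UNIV[OF ideal] unfolding maximal_ideal_def by blast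

lemma qnorm_one: "1/2 \<le> qnorm 1"
  by (rule qnorm_one_ge[OF one_not_in_ideal])

end

text \<open>The hypothetical counterexample refuted in the proof of the Gelfand--Mazur theorem.\<close>
locale nonscalar_residue = banach_maximal_ideal +
  fixes x :: 'a
  assumes nonscalar: "x - cscalar c \<notin> M"
begin

lemma exists_inverse_mod: "\<exists>r. (x - cscalar c) * r - 1 \<in> M"
  using maximal_ideal_inverse_mod[OF maximal nonscalar] .

definition resolvent :: "complex \<Rightarrow> 'a" where
  "resolvent c = (SOME r. (x - cscalar c) * r - 1 \<in> M)"

lemma resolvent_inverse_mod: "(x - cscalar c) * resolvent c - 1 \<in> M"
  unfolding resolvent_def by (rule someI_ex[OF exists_inverse_mod])

lemma resolvent_unique: "(x - cscalar c) * y - 1 \<in> M \<Longrightarrow> y - resolvent c \<in> M"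
proof -
  assume y: "(x - cscalar c) * y - 1 \<in> M"
  have "y - resolvent c =
      resolvent c * ((x - cscalar c) * y - 1) - y * ((x - cscalar c) * resolvent c - 1)"
    by (simp add: algebra_simps)
  also have "\<dots> \<in> M" by (intro ideal_diff ideal_mult_left y resolvent_inverse_mod)
  finally show ?thesis .
qed

lemma resolvent_identity:
  "resolvent l - resolvent u - cscalar (l - u) * (resolvent l * resolvent u) \<in> M"
proof -
  have "resolvent l - resolvent u - cscalar (l - u) * (resolvent l * resolvent u) =
      ((x - cscalar l) * resolvent l - 1) * resolvent u - resolvent l * ((x - cscalar u) * resolvent u - 1)"
    by (simp add: cscalar_diff algebra_simps)
  also have "\<dots> \<in> M" by (intro ideal_diff ideal_mult_left ideal_mult_right resolvent_inverse_mod)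
  finally show ?thesis .
qed

definition rnorm :: "complex \<Rightarrow> real" where "rnorm c = qnorm (resolvent c)"

lemma rnorm_eq_qnorm:
  assumes "(x - cscalar c) * y - 1 \<in> M"
  shows "rnorm c = qnorm y"
  unfolding rnorm_def using resolvent_unique[OF assms] ideal_minus qnorm_cong by fastforce

lemma rnorm_lower: "1/2 \<le> norm (x - cscalar c) * rnorm c"
proof -
  have "qnorm 1 = qnorm ((x - cscalar c) * resolvent c)"
    by (rule qnorm_cong) (use ideal_minus[OF resolvent_inverse_mod[of c]] in simp)
  also have "\<dots> \<le> norm (x - cscalar c) * rnorm c" unfolding rnorm_def by (rule qnorm_mult_norm)
  finally show ?thesis using qnorm_one by simp
qed

lemma rnorm_pos: "0 < rnorm c"
proof -
  have "rnorm c \<noteq> 0" using rnorm_lower[of c] by auto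
  then show ?thesis using qnorm_nonneg by (simp add: rnorm_def order_less_le)
qed

lemma rnorm_decay:
  assumes c: "2 * norm x + 1 \<le> cmod c"
  shows "rnorm c \<le> 2 * (norm (1::'a) + 1) / cmod c"
proof -
  have c_pos: "0 < cmod c" using c norm_ge_zero[of x] by linarith
  define y where "y = cscalar (1 / c) * x"
  have "norm y = norm x / cmod c" by (simp add: y_def norm_cscalar_mult norm_divide)
  also have "\<dots> \<le> 1/2" using c c_pos by (simp add: divide_le_eq)
  finally obtain w where w: "(1 - y) * w = 1" "norm w \<le> 2 * (norm (1::'a) + 1)"
    using neumann_series_inverse by blast
  define r where "r = - (cscalar (1 / c) * w)"
  have "cscalar (1 / c) * cscalar c = 1" using c_pos by (simp add: cscalar_mult[symmetric])
  then have "(x - cscalar c) * r = (1 - y) * w" by (simp add: r_def y_def algebra_simps)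
  then have "rnorm c = qnorm r" using w(1) by (intro rnorm_eq_qnorm) simp
  also have "\<dots> \<le> norm r" by (rule qnorm_le_norm)
  also have "\<dots> = norm w / cmod c" by (simp add: r_def norm_cscalar_mult norm_divide)
  also have "\<dots> \<le> 2 * (norm (1::'a) + 1) / cmod c" using w c_pos by (simp add: divide_right_mono)
  finally show ?thesis .
qed

lemma rnorm_tendsto_zero: "(rnorm \<longlongrightarrow> 0) at_infinity"
proof (rule tendsto_sandwich)
  show "\<forall>\<^sub>F c in at_infinity. 0 \<le> rnorm c" by (simp add: rnorm_def qnorm_nonneg)
  show "\<forall>\<^sub>F c in at_infinity. rnorm c \<le> 2 * (norm (1::'a) + 1) * inverse (cmod c)"
    unfolding eventually_at_infinity using rnorm_decay by (auto simp: field_simps)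
  have "filterlim cmod at_top at_infinity"
    using filterlim_at_infinity_imp_norm_at_top[OF filterlim_ident] .
  then show "((\<lambda>c. 2 * (norm (1::'a) + 1) * inverse (cmod c)) \<longlongrightarrow> 0) at_infinity"
    by (intro tendsto_mult_right_zero tendsto_inverse_0_at_top)
qed (rule tendsto_const)

lemma rnorm_local_bound: "\<exists>d>0. \<exists>C. \<forall>l. cmod (l - u) < d \<longrightarrow> rnorm l \<le> C"
proof -
  have Nu: "0 < rnorm u" by (rule rnorm_pos)
  obtain m where m: "m \<in> M" "norm (resolvent u - m) < qnorm (resolvent u) + rnorm u"
    using qnorm_approx[OF Nu] by blast
  define \<rho> where "\<rho> = resolvent u - m"
  have norm_\<rho>: "norm \<rho> \<le> 2 * rnorm u" using m by (simp add: \<rho>_def rnorm_def)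
  have \<rho>_inverse: "(x - cscalar u) * \<rho> - 1 \<in> M"
  proof -
    have "(x - cscalar u) * \<rho> - 1 = ((x - cscalar u) * resolvent u - 1) - (x - cscalar u) * m"
      by (simp add: \<rho>_def algebra_simps)
    also have "\<dots> \<in> M" by (intro ideal_diff ideal_mult_left resolvent_inverse_mod m)
    finally show ?thesis .
  qed
  define d where "d = 1 / (4 * rnorm u)"
  have d_pos: "0 < d" using Nu by (simp add: d_def)
  have "rnorm l \<le> 2 * rnorm u * (2 * (norm (1::'a) + 1))" if l: "cmod (l - u) < d" for l
  proof -
    define y where "y = cscalar (l - u) * \<rho>"
    have "norm y \<le> d * (2 * rnorm u)"
      unfolding y_def norm_cscalar_mult using l norm_\<rho> d_pos by (intro mult_mono) auto
    also have "\<dots> = 1/2" using Nu by (simp add: d_def)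
    finally obtain w where w: "(1 - y) * w = 1" "norm w \<le> 2 * (norm (1::'a) + 1)"
      using neumann_series_inverse by blast
    have "(x - cscalar l) * (\<rho> * w) - 1 = ((x - cscalar u) * \<rho> - 1) * w + ((1 - y) * w - 1)"
      by (simp add: y_def cscalar_diff algebra_simps)
    also have "\<dots> \<in> M" using w by (simp add: ideal_mult_right[OF \<rho>_inverse])
    finally have "rnorm l = qnorm (\<rho> * w)" by (rule rnorm_eq_qnorm)
    also have "\<dots> \<le> norm \<rho> * norm w" using qnorm_le_norm norm_mult_ineq by (rule order_trans)
    also have "\<dots> \<le> 2 * rnorm u * (2 * (norm (1::'a) + 1))"
      using norm_\<rho> w(2) Nu by (intro mult_mono) auto
    finally show ?thesis .
  qed
  with d_pos show ?thesis by blast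
qed

lemma continuous_rnorm: "isCont rnorm u"
proof -
  obtain d C where d: "d > 0" "\<forall>l. cmod (l - u) < d \<longrightarrow> rnorm l \<le> C"
    using rnorm_local_bound by blast
  have "\<bar>rnorm l - rnorm u\<bar> \<le> C * rnorm u * cmod (l - u)" if l: "cmod (l - u) < d" for l
  proof -
    have "\<bar>rnorm l - rnorm u\<bar> \<le> qnorm (resolvent l - resolvent u)"
      unfolding rnorm_def by (rule qnorm_abs_diff)
    also have "\<dots> = qnorm (cscalar (l - u) * (resolvent l * resolvent u))"
      by (rule qnorm_cong) (rule resolvent_identity)
    also have "\<dots> \<le> cmod (l - u) * (rnorm l * rnorm u)"
      unfolding qnorm_cscalar_mult rnorm_def by (intro mult_left_mono qnorm_mult) simp
    also have "\<dots> \<le> cmod (l - u) * (C * rnorm u)"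
      using d l rnorm_pos[of u] by (intro mult_left_mono mult_right_mono) auto
    finally show ?thesis by (simp add: mult.commute)
  qed
  then have "\<forall>\<^sub>F l in at u. dist (rnorm l) (rnorm u) \<le> dist (C * rnorm u * dist l u) 0"
    using d(1) eventually_at[of _ u UNIV] by (smt (verit) dist_norm dist_real_def real_norm_def abs_ge_self)
  moreover have "((\<lambda>l. C * rnorm u * dist l u) \<longlongrightarrow> 0) (at u)"
    using tendsto_dist[OF tendsto_ident_at tendsto_const, of u u UNIV] by (simp add: tendsto_mult_right_zero)
  ultimately show ?thesis unfolding isCont_def by (rule metric_tendsto_imp_tendsto[rotated])
qed

lemma rnorm_attains_max: "\<exists>z. \<forall>l. rnorm l \<le> rnorm z"
proof -
  have "\<forall>\<^sub>F c in at_infinity. rnorm c < rnorm 0"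
    using rnorm_tendsto_zero rnorm_pos by (rule order_tendstoD(2))
  then obtain b where b: "\<And>c. b \<le> cmod c \<Longrightarrow> rnorm c < rnorm 0"
    unfolding eventually_at_infinity by blast
  have "continuous_on (cball 0 \<bar>b\<bar>) rnorm"
    by (intro continuous_at_imp_continuous_on ballI continuous_rnorm)
  then obtain z where z: "z \<in> cball 0 \<bar>b\<bar>" "\<forall>l\<in>cball 0 \<bar>b\<bar>. rnorm l \<le> rnorm z"
    using continuous_attains_sup[OF compact_cball] by (metis abs_ge_zero cball_eq_empty not_less)
  have "rnorm l \<le> rnorm z" for l
  proof (cases "l \<in> cball 0 \<bar>b\<bar>")
    case False
    then have "rnorm l < rnorm 0" by (intro b) auto
    also have "\<dots> \<le> rnorm z" using z by simp
    finally show ?thesis by simp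
  qed (use z in blast)
  then show ?thesis by blast
qed

lemma resolvent_power_expansion:
  "resolvent (z + s) - (\<Sum>j<n. cscalar s ^ j * resolvent z ^ Suc j)
     - cscalar s ^ n * (resolvent z ^ n * resolvent (z + s)) \<in> M"
proof -
  define P where "P = resolvent z"
  define Q where "Q = resolvent (z + s)"
  define t where "t = cscalar s * P"
  define G where "G = (\<Sum>j<n. t ^ j)"
  have geometric: "(1 - t) * G = 1 - t ^ n" unfolding G_def by (rule one_diff_power_eq[symmetric])
  have PG: "P * G = (\<Sum>j<n. cscalar s ^ j * P ^ Suc j)"
    unfolding G_def t_def by (simp add: sum_distrib_left power_mult_distrib mult_ac)
  have "(Q - P - cscalar s * (Q * P)) * G = Q * ((1 - t) * G) - P * G"
    by (simp add: t_def algebra_simps)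
  also have "\<dots> = Q - (\<Sum>j<n. cscalar s ^ j * P ^ Suc j) - cscalar s ^ n * (P ^ n * Q)"
    unfolding geometric PG by (simp add: t_def algebra_simps)
  finally show ?thesis
    using ideal_mult_right[OF resolvent_identity[of "z + s" z], of G] by (simp add: P_def Q_def)
qed

text \<open>Averaging the expansion over the rotations of r by the n-th roots of unity cancels
  all middle terms of the geometric series.\<close>
lemma resolvent_root_average:
  fixes z r :: complex
  assumes n: "n \<ge> 1"
  defines "S \<equiv> (\<Sum>k<n. resolvent (z + unit_root n ^ k * r))"
  shows "S - cscalar (of_nat n) * resolvent z - cscalar (r ^ n) * (resolvent z ^ n * S) \<in> M"
proof -
  define P where "P = resolvent z"
  define s where "s k = unit_root n ^ k * r" for k
  have middle: "(\<Sum>k<n. \<Sum>j<n. cscalar (s k) ^ j * P ^ Suc j) = cscalar (of_nat n) * P"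
  proof -
    have "(\<Sum>k<n. \<Sum>j<n. cscalar (s k) ^ j * P ^ Suc j) = (\<Sum>j<n. cscalar (\<Sum>k<n. s k ^ j) * P ^ Suc j)"
      by (subst sum.swap) (simp add: cscalar_sum cscalar_power sum_distrib_right)
    also have "\<dots> = (\<Sum>j<n. if j = 0 then cscalar (of_nat n) * P else 0)"
      by (intro sum.cong refl) (simp add: s_def sum_unit_root_power_mult_power[OF n])
    also have "\<dots> = cscalar (of_nat n) * P" using n by simp
    finally show ?thesis .
  qed
  have last: "(\<Sum>k<n. cscalar (s k) ^ n * (P ^ n * resolvent (z + s k))) = cscalar (r ^ n) * (P ^ n * S)"
    by (simp add: s_def S_def cscalar_power[symmetric] unit_root_power_mult_power[OF n] sum_distrib_left)
  have "(\<Sum>k<n. resolvent (z + s k) - (\<Sum>j<n. cscalar (s k) ^ j * P ^ Suc j)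
      - cscalar (s k) ^ n * (P ^ n * resolvent (z + s k))) \<in> M"
    unfolding P_def by (intro ideal_sum resolvent_power_expansion)
  also have "(\<Sum>k<n. resolvent (z + s k) - (\<Sum>j<n. cscalar (s k) ^ j * P ^ Suc j)
      - cscalar (s k) ^ n * (P ^ n * resolvent (z + s k)))
      = S - cscalar (of_nat n) * P - cscalar (r ^ n) * (P ^ n * S)"
    unfolding sum_subtractf middle last by (simp add: S_def s_def)
  finally show ?thesis by (simp add: P_def)
qed

lemma qnorm_root_average_le:
  assumes n: "n \<ge> 1" and max: "\<And>l. rnorm l \<le> rnorm z"
  shows "qnorm (\<Sum>k<n. resolvent (z + unit_root n ^ k * r)) \<le> rnorm (z + r) + real (n - 1) * rnorm z"
proof -
  obtain n' where n': "n = Suc n'" using n by (cases n) auto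
  have "qnorm (\<Sum>k<n. resolvent (z + unit_root n ^ k * r)) \<le> (\<Sum>k<n. rnorm (z + unit_root n ^ k * r))"
    unfolding rnorm_def by (rule qnorm_sum)
  also have "\<dots> = rnorm (z + r) + (\<Sum>k<n'. rnorm (z + unit_root n ^ Suc k * r))"
    unfolding n' sum.lessThan_Suc_shift by simp
  also have "\<dots> \<le> rnorm (z + r) + real n' * rnorm z"
    using sum_bounded_above[of "{..<n'}" _ "rnorm z"] max by simp
  finally show ?thesis by (simp add: n')
qed

lemma rnorm_mean_value:
  assumes n: "n \<ge> 1" and max: "\<And>l. rnorm l \<le> rnorm z" and r: "cmod r * rnorm z \<le> 1/4"
  shows "rnorm z - rnorm (z + r) \<le> rnorm z * (1/2) ^ n"
proof -
  define m where "m = rnorm z"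
  define P where "P = resolvent z"
  define S where "S = (\<Sum>k<n. resolvent (z + unit_root n ^ k * r))"
  have m: "0 < m" "\<And>l. rnorm l \<le> m" using rnorm_pos max by (simp_all add: m_def)
  have qS: "qnorm S \<le> rnorm (z + r) + real (n - 1) * m"
    unfolding S_def m_def by (rule qnorm_root_average_le[OF n max])
  then have qS_le: "qnorm S \<le> real n * m" using m(2)[of "z + r"] n by (simp add: algebra_simps)
  have "real n * m = qnorm (cscalar (of_nat n) * P)"
    by (simp add: qnorm_cscalar_mult m_def rnorm_def P_def)
  also have "\<dots> = qnorm (S - cscalar (r ^ n) * (P ^ n * S))"
    using resolvent_root_average[OF n, of z r] qnorm_cong ideal_minus unfolding P_def S_def
    by (metis (no_types, lifting) minus_diff_eq diff_diff_eq2 diff_diff_eq)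
  also have "\<dots> \<le> qnorm S + cmod r ^ n * qnorm (P ^ n * S)"
    using qnorm_diff[of S "cscalar (r ^ n) * (P ^ n * S)"] by (simp add: qnorm_cscalar_mult norm_power)
  also have "\<dots> \<le> qnorm S + cmod r ^ n * (m ^ n * qnorm S)"
  proof -
    have "qnorm (P ^ n) \<le> m ^ n" using qnorm_power[of P "n - 1"] n by (simp add: m_def rnorm_def P_def)
    then have "qnorm (P ^ n * S) \<le> m ^ n * qnorm S"
      using qnorm_mult[of "P ^ n" S] qnorm_nonneg[of S] by (meson mult_right_mono order_trans)
    then show ?thesis by (simp add: mult_left_mono)
  qed
  also have "\<dots> \<le> qnorm S + (1/4) ^ n * (real n * m)"
  proof -
    have "cmod r ^ n * m ^ n \<le> (1/4) ^ n"
      unfolding power_mult_distrib[symmetric] using r m by (intro power_mono) (simp_all add: m_def)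
    then have "cmod r ^ n * m ^ n * qnorm S \<le> (1/4) ^ n * (real n * m)"
      using qS_le qnorm_nonneg[of S] by (intro mult_mono) auto
    then show ?thesis by (simp add: mult.assoc)
  qed
  finally have "m - rnorm (z + r) \<le> (1/4) ^ n * (real n * m)"
    using qS n by (simp add: algebra_simps)
  also have "\<dots> = m * (1/2) ^ n * (real n * (1/2) ^ n)"
    by (simp add: power_mult_distrib[symmetric] mult_ac)
  also have "\<dots> \<le> m * (1/2) ^ n"
    using less_exp[of n] m(1) by (simp add: mult_le_cancel_left1 field_simps)
  finally show ?thesis by (simp add: m_def)
qed

lemma rnorm_constant_near_max:
  assumes max: "\<And>l. rnorm l \<le> rnorm z" and r: "cmod r * rnorm z \<le> 1/4"
  shows "rnorm (z + r) = rnorm z"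
proof -
  have "(\<lambda>n. rnorm z * (1/2) ^ n) \<longlonglongrightarrow> 0"
    by (intro tendsto_mult_right_zero LIMSEQ_power_zero) simp
  then have "rnorm z - rnorm (z + r) \<le> 0"
    using rnorm_mean_value[OF _ max r] by (intro LIMSEQ_le_const exI[of _ 1]) auto
  with max[of "z + r"] show ?thesis by simp
qed

text \<open>By rnorm_constant_near_max the set where rnorm attains its maximum is open; being also
  closed, it is all of the complex plane, which contradicts rnorm_tendsto_zero.\<close>
lemma nonscalar_residue_absurd: False
proof -
  obtain z where max: "\<And>l. rnorm l \<le> rnorm z" using rnorm_attains_max by blast
  define m where "m = rnorm z"
  have m: "0 < m" unfolding m_def by (rule rnorm_pos)
  define S where "S = {l. rnorm l = m}"
  have "closed S"
    unfolding S_def by (intro closed_Collect_eq continuous_at_imp_continuous_on ballI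
      continuous_rnorm continuous_on_const)
  moreover have "open S"
    unfolding open_contains_ball
  proof (intro ballI exI conjI subsetI)
    fix l l' assume l: "l \<in> S" and "l' \<in> ball l (1 / (4 * m))"
    then have "cmod (l' - l) * rnorm l \<le> 1/4"
      using l m by (simp add: S_def dist_norm norm_minus_commute field_simps)
    with l max show "l' \<in> S" using rnorm_constant_near_max[of l "l' - l"] by (simp add: S_def m_def)
  qed (use m in simp)
  moreover have "z \<in> S" by (simp add: S_def m_def)
  ultimately have "- S = {}"
    using connectedD[OF connected_UNIV, of S "- S"] by (auto simp: open_Compl)
  then have "rnorm = (\<lambda>_. m)" unfolding S_def by auto
  then show False
    using rnorm_tendsto_zero m tendsto_const_iff[OF trivial_limit_at_infinity[where 'a=complex], of m 0]
    by simp
qed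

end

context banach_maximal_ideal
begin

theorem gelfand_mazur: "\<exists>c. y - cscalar c \<in> M"
proof (rule ccontr)
  assume "\<nexists>c. y - cscalar c \<in> M"
  then interpret nonscalar_residue sc M y by unfold_locales blast
  show False by (rule nonscalar_residue_absurd)
qed

lemma scalar_residue_unique:
  assumes "y - cscalar c \<in> M" "y - cscalar d \<in> M"
  shows "c = d"
proof (rule ccontr)
  assume "c \<noteq> d"
  have "cscalar (d - c) \<in> M"
    using ideal_diff[OF assms] by (simp add: cscalar_diff)
  then have "cscalar (1 / (d - c)) * cscalar (d - c) \<in> M" by (rule ideal_mult_left)
  with \<open>c \<noteq> d\<close> show False using one_not_in_ideal by (simp add: cscalar_mult[symmetric])
qed

definition scalar_residue :: "'a \<Rightarrow> complex" where "scalar_residue y = (THE c. y - cscalar c \<in> M)"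

lemma scalar_residue_eqI: "y - cscalar c \<in> M \<Longrightarrow> scalar_residue y = c"
  unfolding scalar_residue_def using scalar_residue_unique by blast

lemma scalar_residue_mem: "y - cscalar (scalar_residue y) \<in> M"
  using gelfand_mazur scalar_residue_eqI by metis

lemma scalar_residue_character: "scalar_residue \<in> characters sc"
proof -
  have "scalar_residue (y + z) = scalar_residue y + scalar_residue z" for y z
    using ideal_add[OF scalar_residue_mem[of y] scalar_residue_mem[of z]]
    by (intro scalar_residue_eqI) (simp add: cscalar_add algebra_simps)
  moreover have "scalar_residue (sc c y) = c * scalar_residue y" for c y
    using ideal_mult_left[OF scalar_residue_mem[of y], of "cscalar c"]
    by (intro scalar_residue_eqI) (simp add: sc_eq_cscalar_mult cscalar_mult algebra_simps)
  moreover have "scalar_residue (y * z) = scalar_residue y * scalar_residue z" for y z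
  proof (rule scalar_residue_eqI)
    have "y * z - cscalar (scalar_residue y * scalar_residue z) =
        (y - cscalar (scalar_residue y)) * z + cscalar (scalar_residue y) * (z - cscalar (scalar_residue z))"
      by (simp add: cscalar_mult algebra_simps)
    then show "y * z - cscalar (scalar_residue y * scalar_residue z) \<in> M"
      using ideal_add[OF ideal_mult_right ideal_mult_left] scalar_residue_mem by metis
  qed
  moreover have "scalar_residue 1 = 1" by (rule scalar_residue_eqI) simp
  ultimately show ?thesis unfolding characters_def by (auto dest: fun_cong[of _ _ 1])
qed

lemma scalar_residue_eq_0_iff: "scalar_residue y = 0 \<longleftrightarrow> y \<in> M"
  using scalar_residue_mem[of y] scalar_residue_eqI[of y 0] by auto

end

lemma maximal_ideal_character_kernel:
  fixes sc :: "complex \<Rightarrow> 'a::{real_normed_algebra,comm_ring_1,banach} \<Rightarrow> 'a"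
  assumes "complex_scaling sc" "maximal_ideal M"
  shows "\<exists>\<phi>\<in>characters sc. M = {y. \<phi> y = 0}"
proof -
  interpret banach_maximal_ideal sc M
    using assms by unfold_locales (simp_all add: maximal_ideal_def)
  show ?thesis using scalar_residue_character scalar_residue_eq_0_iff by blast
qed

context complex_banach_algebra
begin

lemma semisimple_character_separation:
  assumes "semisimple TYPE('a)" "\<And>\<phi>. \<phi> \<in> characters sc \<Longrightarrow> \<phi> y = 0"
  shows "y = 0"
proof -
  have "y \<in> I" if "maximal_ideal I" for I
    using maximal_ideal_character_kernel[OF complex_scaling that] assms(2) by blast
  then show ?thesis using assms(1) unfolding semisimple_def by blast
qed

end

section \<open>Riesz's lemma\<close>

lemma infdist_scaleR_le_norm:
  fixes S :: "'a::real_normed_vector set"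
  assumes S: "subspace S" and s: "s \<in> S"
  shows "\<bar>a\<bar> * infdist v S \<le> norm (s + a *\<^sub>R v)"
proof (cases "a = 0")
  case False
  have "- (1/a) *\<^sub>R s \<in> S" using S s by (simp add: subspace_neg subspace_scale)
  then have "\<bar>a\<bar> * infdist v S \<le> \<bar>a\<bar> * norm (v + (1/a) *\<^sub>R s)"
    using infdist_le[of "- (1/a) *\<^sub>R s" S v] by (simp add: dist_norm mult_left_mono)
  also have "\<dots> = norm (s + a *\<^sub>R v)"
    using False by (simp flip: norm_scaleR add: algebra_simps)
  finally show ?thesis .
qed simp

lemma span_insert_subspace:
  assumes "subspace S"
  shows "y \<in> span (insert v S) \<longleftrightarrow> (\<exists>k. y - k *\<^sub>R v \<in> S)"
proof -
  have "span S = S" using assms by simp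
  then show ?thesis using span_breakdown_eq[of y v S] by (simp only:)
qed

lemma closed_span_insert:
  fixes S :: "'a::real_normed_vector set"
  assumes S: "subspace S" "closed S"
  shows "closed (span (insert v S))"
proof (cases "v \<in> S")
  case True
  have "span S = S" using S by simp
  then show ?thesis using True S(2) by (metis insert_absorb)
next
  case False
  define d where "d = infdist v S"
  have d: "0 < d"
    unfolding d_def using S False subspace_0 by (auto intro: infdist_pos_not_in_closed)
  show ?thesis unfolding closed_sequential_limits
  proof (intro allI impI, elim conjE)
    fix y l assume y: "\<forall>n. y n \<in> span (insert v S)" and lim: "y \<longlonglongrightarrow> l"
    then have "\<forall>n. \<exists>k. y n - k *\<^sub>R v \<in> S" using span_insert_subspace[OF S(1)] by blast
    then obtain a where s: "\<And>n. y n - a n *\<^sub>R v \<in> S" by metis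
    have "\<bar>a m - a n\<bar> * d \<le> dist (y m) (y n)" for m n
    proof -
      have "(y m - a m *\<^sub>R v) - (y n - a n *\<^sub>R v) \<in> S" by (rule subspace_diff[OF S(1) s s])
      from infdist_scaleR_le_norm[OF S(1) this, of "a m - a n" v]
      show ?thesis by (simp add: d_def dist_norm algebra_simps)
    qed
    have "Cauchy a"
    proof (rule metric_CauchyI)
      fix e :: real assume "0 < e"
      then obtain K where "\<forall>m\<ge>K. \<forall>n\<ge>K. dist (y m) (y n) < e * d"
        using metric_CauchyD[OF LIMSEQ_imp_Cauchy[OF lim], of "e * d"] d by auto
      with \<open>\<And>m n. \<bar>a m - a n\<bar> * d \<le> dist (y m) (y n)\<close> d
      show "\<exists>K. \<forall>m\<ge>K. \<forall>n\<ge>K. dist (a m) (a n) < e"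
        by (metis dist_real_def le_less_trans mult_less_cancel_right_pos)
    qed
    then obtain A where "a \<longlonglongrightarrow> A" using Cauchy_convergent_iff convergent_def by blast
    then have "(\<lambda>n. y n - a n *\<^sub>R v) \<longlonglongrightarrow> l - A *\<^sub>R v" by (intro tendsto_intros lim)
    then have "l - A *\<^sub>R v \<in> S" by (rule closed_sequentially[OF S(2) s])
    then show "l \<in> span (insert v S)" using span_insert_subspace[OF S(1)] by blast
  qed
qed

lemma riesz_lemma:
  fixes S :: "'a::real_normed_vector set"
  assumes S: "subspace S" "closed S" and v: "v \<notin> S"
  shows "\<exists>x\<in>span (insert v S). norm x = 1/2 \<and> (\<forall>w\<in>S. 1/4 \<le> norm (x - w))"
proof -
  have S_ne: "S \<noteq> {}" using subspace_0[OF S(1)] by blast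
  define d where "d = infdist v S"
  have d: "0 < d" unfolding d_def by (rule infdist_pos_not_in_closed[OF S(2) S_ne v])
  obtain z where z: "z \<in> S" "dist v z < 2 * d"
    using infdist_lessD[OF S_ne, of v "2 * d"] d by (auto simp: d_def)
  define \<rho> where "\<rho> = norm (v - z)"
  have "d \<le> \<rho>" unfolding \<rho>_def d_def using infdist_le[OF z(1), of v] by (simp add: dist_norm)
  then have \<rho>: "0 < \<rho>" "\<rho> < 2 * d" using d z(2) unfolding \<rho>_def dist_norm by linarith+
  define x where "x = (1 / (2 * \<rho>)) *\<^sub>R (v - z)"
  have "x - (1 / (2 * \<rho>)) *\<^sub>R v \<in> S"
    using S(1) z(1) by (simp add: x_def algebra_simps subspace_neg subspace_scale)
  then have "x \<in> span (insert v S)" using span_insert_subspace[OF S(1)] by blast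
  moreover have "norm x = 1/2" using \<rho> by (simp add: x_def \<rho>_def)
  moreover have "1/4 \<le> norm (x - w)" if w: "w \<in> S" for w
  proof -
    have "z + (2 * \<rho>) *\<^sub>R w \<in> S" using S(1) z(1) w by (simp add: subspace_add subspace_scale)
    then have "d \<le> norm (v - (z + (2 * \<rho>) *\<^sub>R w))"
      unfolding d_def using infdist_le by (metis dist_norm)
    also have "\<dots> = 2 * \<rho> * norm (x - w)"
    proof -
      have "x - w = (1 / (2 * \<rho>)) *\<^sub>R (v - (z + (2 * \<rho>) *\<^sub>R w))"
        using \<rho> by (simp add: x_def algebra_simps)
      then show ?thesis using \<rho> by simp
    qed
    finally have "\<rho> * 1 \<le> \<rho> * (4 * norm (x - w))" using \<rho> by linarith
    then show ?thesis using \<rho>(1) by (simp add: mult_le_cancel_left_pos)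
  qed
  ultimately show ?thesis by blast
qed

lemma span_insert_span: "span (insert a (span S)) = span (insert a S)"
  by (simp add: span_insert span_span)

lemma closed_span_image_atMost:
  fixes g :: "nat \<Rightarrow> 'a::real_normed_vector"
  shows "closed (span (g ` {..n}))"
proof (induction n)
  case 0
  have "closed (span (insert (g 0) (span {})))" by (intro closed_span_insert) simp_all
  then show ?case by (simp add: span_insert_span insert_commute)
next
  case (Suc n)
  have "closed (span (insert (g (Suc n)) (span (g ` {..n}))))"
    by (intro closed_span_insert subspace_span Suc)
  then show ?case by (simp add: span_insert_span atMost_Suc)
qed

lemma span_image_atMost_sum:
  fixes g :: "nat \<Rightarrow> 'a::real_vector"
  shows "y \<in> span (g ` {..n}) \<Longrightarrow> \<exists>c. y = (\<Sum>i\<le>n. c i *\<^sub>R g i)"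
proof (induction n arbitrary: y)
  case 0
  then obtain k where "y = k *\<^sub>R g 0" by (auto simp: span_breakdown_eq)
  then show ?case by auto
next
  case (Suc n)
  then obtain k where "y - k *\<^sub>R g (Suc n) \<in> span (g ` {..n})"
    by (auto simp: atMost_Suc span_breakdown_eq)
  then obtain c where "y = (\<Sum>i\<le>n. c i *\<^sub>R g i) + k *\<^sub>R g (Suc n)"
    using Suc.IH by (metis diff_add_cancel)
  then have "y = (\<Sum>i\<le>Suc n. (c(Suc n := k)) i *\<^sub>R g i)" by simp
  then show ?case by blast
qed

lemma compact_imp_close_pair:
  fixes z :: "nat \<Rightarrow> 'a::metric_space"
  assumes "compact C" "\<And>n. z n \<in> C" "0 < e"
  shows "\<exists>m n. m < n \<and> dist (z m) (z n) < e"
proof -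
  obtain l r where "strict_mono r" "(z \<circ> r) \<longlonglongrightarrow> l"
    using compact_imp_seq_compact[OF assms(1)] assms(2) unfolding seq_compact_def by metis
  moreover obtain K where "\<forall>m\<ge>K. \<forall>n\<ge>K. dist ((z \<circ> r) m) ((z \<circ> r) n) < e"
    using metric_CauchyD[OF LIMSEQ_imp_Cauchy[OF calculation(2)] assms(3)] by blast
  ultimately show ?thesis by (metis comp_apply le_SucI order_refl strict_mono_Suc_iff)
qed

text \<open>Riesz's argument: otherwise the Riesz lemma yields points of norm 1/2 in E, pairwise at
  distance at least 1/4, whose approximants in C would be pairwise 1/8 apart.\<close>
lemma approximable_by_compact_imp_dependent:
  fixes g :: "nat \<Rightarrow> 'a::real_normed_vector"
  assumes E: "subspace E" and g: "\<And>i. g i \<in> E" and C: "compact C"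
    and approx: "\<And>x. x \<in> E \<Longrightarrow> norm x < 1 \<Longrightarrow> \<exists>z\<in>C. norm (x - z) < 1/16"
  shows "\<exists>N. g (Suc N) \<in> span (g ` {..N})"
proof (rule ccontr)
  assume "\<nexists>N. g (Suc N) \<in> span (g ` {..N})"
  then have "\<exists>x\<in>span (g ` {..Suc N}). norm x = 1/2 \<and> (\<forall>w\<in>span (g ` {..N}). 1/4 \<le> norm (x - w))" for N
    using riesz_lemma[OF subspace_span closed_span_image_atMost, of "g (Suc N)" g N]
    by (simp add: span_insert_span atMost_Suc)
  then obtain x where x: "\<And>N. x N \<in> span (g ` {..Suc N})" "\<And>N. norm (x N) = 1/2"
    "\<And>N w. w \<in> span (g ` {..N}) \<Longrightarrow> 1/4 \<le> norm (x N - w)"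
    by metis
  have xE: "x N \<in> E" for N using x(1)[of N] span_minimal[OF _ E, of "g ` {..Suc N}"] g by blast
  have "\<exists>z\<in>C. norm (x N - z) < 1/16" for N by (rule approx[OF xE]) (simp add: x(2))
  then obtain z where z: "\<And>N. z N \<in> C" "\<And>N. norm (x N - z N) < 1/16" by metis
  have separated: "1/8 \<le> dist (z m) (z n)" if "m < n" for m n
  proof -
    have "x m \<in> span (g ` {..n})"
      using x(1)[of m] span_mono[OF image_mono[of "{..Suc m}" "{..n}"]] that by auto
    then have "1/4 \<le> norm (x n - x m)" by (rule x(3))
    also have "\<dots> \<le> norm ((x n - z n) - (x m - z m)) + norm (z n - z m)"
      using norm_triangle_ineq[of "(x n - z n) - (x m - z m)" "z n - z m"] by simp
    also have "\<dots> \<le> norm (x n - z n) + norm (x m - z m) + dist (z m) (z n)"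
      using norm_triangle_ineq4[of "x n - z n" "x m - z m"] by (simp add: dist_norm norm_minus_commute)
    finally show ?thesis using z(2)[of n] z(2)[of m] by linarith
  qed
  obtain m n where "m < n" "dist (z m) (z n) < 1/8"
    using compact_imp_close_pair[of C z "1/8"] C z(1) by auto
  then show False using separated by fastforce
qed

section \<open>Riesz operators\<close>

lemma bounded_linear_funpow:
  fixes T :: "'a::real_normed_vector \<Rightarrow> 'a"
  assumes "bounded_linear T"
  shows "bounded_linear (T ^^ n)"
proof (induction n)
  case 0
  show ?case by (simp add: id_def)
next
  case (Suc n)
  have "T ^^ Suc n = (\<lambda>x. T ((T ^^ n) x))" by (rule ext) simp
  then show ?case using bounded_linear_compose[OF assms Suc.IH] by simp
qed

context complex_banach_algebra
begin

lemma bounded_op_bounded_linear: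
  assumes "bounded_op sc K"
  shows "bounded_linear K"
proof -
  obtain B where "\<And>x. norm (K x) \<le> norm x * B" using assms unfolding bounded_op_def by blast
  moreover have add: "K (x + y) = K x + K y" and scale: "K (sc c x) = sc c (K x)" for x y c
    using assms unfolding bounded_op_def clinear_map_def by blast+
  moreover have "K (r *\<^sub>R x) = r *\<^sub>R K x" for r x
    using scale[of "complex_of_real r" x] by (simp add: sc_of_real)
  ultimately show ?thesis by (intro bounded_linear_intro)
qed

lemma compact_op_zero: "compact_op sc (\<lambda>_. 0)"
proof -
  have "bounded_op sc (\<lambda>_. 0)"
    unfolding bounded_op_def clinear_map_def by (auto simp: sc_eq_cscalar_mult intro: exI[of _ 0])
  then show ?thesis unfolding compact_op_def by (simp add: image_constant_conv)
qed

lemma riesz_op_approx: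
  assumes "riesz_op sc T" "0 < e"
  shows "\<exists>n K. compact_op sc K \<and> onorm (\<lambda>x. (T ^^ n) x - K x) < e"
proof -
  define dists where "dists n = {onorm (\<lambda>x. (T ^^ n) x - K x) | K. compact_op sc K}" for n
  define e' where "e' = min e 1"
  have e': "0 < e'" "e' \<le> 1" "e' \<le> e" using assms(2) by (simp_all add: e'_def)
  have "(\<lambda>n. Inf (dists n) powr (1 / real n)) \<longlonglongrightarrow> 0"
    using assms(1) unfolding riesz_op_def dists_def by blast
  then have "\<forall>\<^sub>F n in sequentially. Inf (dists n) powr (1 / real n) < e'"
    using e'(1) by (rule order_tendstoD(2))
  then obtain N where "\<And>n. n \<ge> N \<Longrightarrow> Inf (dists n) powr (1 / real n) < e'"
    unfolding eventually_sequentially by blast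
  then have N: "Inf (dists (Suc N)) powr (1 / real (Suc N)) < e'" by (meson lessI less_imp_le)
  have "Inf (dists (Suc N)) < e'"
  proof (rule ccontr)
    assume "\<not> Inf (dists (Suc N)) < e'"
    then have "e' powr (1 / real (Suc N)) \<le> Inf (dists (Suc N)) powr (1 / real (Suc N))"
      using e' by (intro powr_mono2) auto
    moreover have "e' powr 1 \<le> e' powr (1 / real (Suc N))"
      using e' by (intro powr_mono') auto
    ultimately show False using N e' by simp
  qed
  moreover have "dists (Suc N) \<noteq> {}" unfolding dists_def using compact_op_zero by blast
  ultimately obtain d where "d \<in> dists (Suc N)" "d < e'" using cInf_lessD by blast
  then obtain K where K: "compact_op sc K" "onorm (\<lambda>x. (T ^^ Suc N) x - K x) < e'"
    by (auto simp: dists_def)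
  then have "onorm (\<lambda>x. (T ^^ Suc N) x - K x) < e" using e'(3) by linarith
  with K(1) show ?thesis by blast
qed

end

locale riesz_endomorphism = complex_banach_algebra sc
  for sc :: "complex \<Rightarrow> 'a::{real_normed_algebra,comm_ring_1,banach} \<Rightarrow> 'a" +
  fixes T :: "'a \<Rightarrow> 'a"
  assumes endomorphism: "unital_endomorphism sc T"
    and riesz: "riesz_op sc T"
begin

lemma T_sc: "T (sc c x) = sc c (T x)"
  and T_mult: "T (x * y) = T x * T y"
  and T_one: "T 1 = 1"
  using endomorphism unfolding unital_endomorphism_def clinear_map_def by blast+

lemma bounded_linear_T: "bounded_linear T"
  using riesz bounded_op_bounded_linear unfolding riesz_op_def by blast

text \<open>On the fixed space, T^n is the identity, so the unit ball of the fixed space lies within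
  1/16 of the relatively compact image of the unit ball under K.\<close>
lemma fixed_point_powers_dependent:
  assumes "T f = f"
  shows "\<exists>N c. f ^ Suc N = (\<Sum>i\<le>N. c i *\<^sub>R f ^ i)"
proof -
  obtain n K where K: "compact_op sc K" "onorm (\<lambda>x. (T ^^ n) x - K x) < 1/16"
    using riesz_op_approx[OF riesz, of "1/16"] by auto
  have "bounded_linear K" using K(1) bounded_op_bounded_linear unfolding compact_op_def by blast
  then have diff: "bounded_linear (\<lambda>x. (T ^^ n) x - K x)"
    by (intro bounded_linear_sub bounded_linear_funpow bounded_linear_T)
  define E where "E = {x. T x = x}"
  have E: "subspace E"
    unfolding E_def subspace_def using bounded_linear_T
    by (simp add: linear_simps bounded_linear.linear)
  have powers: "f ^ i \<in> E" for i
    unfolding E_def by (induction i) (simp_all add: T_one T_mult assms)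
  have compact: "compact (closure (K ` ball 0 1))" using K(1) unfolding compact_op_def by blast
  have approx: "\<exists>z\<in>closure (K ` ball 0 1). norm (x - z) < 1/16" if x: "x \<in> E" "norm x < 1" for x
  proof -
    have "(T ^^ n) x = x" using x(1) unfolding E_def by (induction n) simp_all
    then have "norm (x - K x) \<le> onorm (\<lambda>x. (T ^^ n) x - K x) * norm x"
      using onorm[OF diff, of x] by simp
    also have "\<dots> \<le> onorm (\<lambda>x. (T ^^ n) x - K x) * 1"
      using x(2) onorm_pos_le[OF diff] by (intro mult_left_mono) auto
    also have "\<dots> < 1/16" using K(2) by simp
    finally have "norm (x - K x) < 1/16" .
    moreover have "K x \<in> closure (K ` ball 0 1)" using x(2) closure_subset by fastforce
    ultimately show ?thesis by blast
  qed
  obtain N where "f ^ Suc N \<in> span ((\<lambda>i. f ^ i) ` {..N})"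
    using approximable_by_compact_imp_dependent[of E "\<lambda>i. f ^ i", OF E powers compact approx] by blast
  then show ?thesis using span_image_atMost_sum[of "f ^ Suc N" "\<lambda>i. f ^ i" N] by blast
qed

lemma character_values_of_fixed_point_finite:
  assumes "T f = f"
  shows "finite ((\<lambda>\<phi>. \<phi> f) ` characters sc)"
proof -
  obtain N c where N: "f ^ Suc N = (\<Sum>i\<le>N. c i *\<^sub>R f ^ i)"
    using fixed_point_powers_dependent[OF assms] by blast
  define a where "a i = (if i = Suc N then 1 else - complex_of_real (c i))" for i
  have "(\<lambda>\<phi>. \<phi> f) ` characters sc \<subseteq> {z. (\<Sum>i\<le>Suc N. a i * z ^ i) = 0}"
  proof clarify
    fix \<phi> assume "\<phi> \<in> characters sc"
    note \<phi> = characterD[OF this]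
    have "\<phi> f ^ Suc N = (\<Sum>i\<le>N. complex_of_real (c i) * \<phi> f ^ i)"
      using arg_cong[OF N, of \<phi>] by (simp only: \<phi>)
    moreover have "(\<Sum>i\<le>N. a i * \<phi> f ^ i) = - (\<Sum>i\<le>N. complex_of_real (c i) * \<phi> f ^ i)"
      by (simp add: a_def sum_negf[symmetric])
    ultimately show "(\<Sum>i\<le>Suc N. a i * \<phi> f ^ i) = 0" by (simp add: a_def)
  qed
  moreover have "finite {z. (\<Sum>i\<le>Suc N. a i * z ^ i) = 0}"
    by (rule polyfun_rootbound_finite) (auto simp: a_def)
  ultimately show ?thesis by (rule finite_subset)
qed

end

theorem theorem2p1:
  fixes sc :: "complex \<Rightarrow> 'a::{real_normed_algebra,comm_ring_1,banach} \<Rightarrow> 'a"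
    and T :: "'a \<Rightarrow> 'a"
  assumes "complex_scaling sc"
    and "semisimple TYPE('a)"
    and "connected (characters sc)"
    and "unital_endomorphism sc T"
    and "riesz_op sc T"
  shows "{f. T f = f} = range (\<lambda>c. sc c 1)"
proof -
  interpret riesz_endomorphism sc T by unfold_locales fact+
  have "f \<in> range (\<lambda>c. sc c 1)" if fixed: "T f = f" for f
  proof -
    have "continuous_on (characters sc) (\<lambda>\<phi>. \<phi> f)"
      by (rule continuous_on_subset[OF continuous_on_product_coordinates]) simp
    then obtain l where l: "\<And>\<phi>. \<phi> \<in> characters sc \<Longrightarrow> \<phi> f = l"
      using continuous_finite_range_constant[OF assms(3) _ character_values_of_fixed_point_finite[OF fixed]]
      unfolding constant_on_def by blast
    have "f - sc l 1 = 0"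
      by (rule semisimple_character_separation[OF assms(2)]) (simp add: characterD l)
    then show ?thesis by (simp add: range_eqI)
  qed
  moreover have "T (sc c 1) = sc c 1" for c by (simp add: T_sc T_one)
  ultimately show ?thesis by blast
qed

end
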